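(* Let $(\mathfrak{a},\alpha,\beta)$ and $(V,\alpha_{V_0},\beta_{V_1})$ be multiplicative Hom-Lie antialgebras and let $\rho=(\rho_0,\rho_1)$ be an action of $(\mathfrak{a},\alpha,\beta)$ on $(V,\alpha_{V_0},\beta_{V_1})$. Then the $\mathbb{Z}_2$-graded space $\mathfrak{a}\oplus V$ with even part $\mathfrak{a}_0\oplus V_0$ and odd part $\mathfrak{a}_1\oplus V_1$, with maps $(\alpha+\alpha_{V_0})(x,u)=(\alpha(x),\alpha_{V_0}(u))$, $(\beta+\beta_{V_1})(y,w)=(\beta(y),\beta_{V_1}(w))$ and products $(x_1,u_1)\cdot(x_2,u_2)=(x_1\cdot x_2,\ \rho_0(x_1)(u_2)+\rho_0(x_2)(u_1)+u_1\cdot u_2)$, $(x_1,u_1)\cdot(y_1,w_1)=(x_1\cdot y_1,\ \rho_0(x_1)(w_1)+\rho_1(y_1)(u_1)+u_1\cdot w_1)$, $[(y_1,w_1),(y_2,w_2)]=([y_1,y_2],\ \rho_1(y_1)(w_2)-\rho_1(y_2)(w_1)+[w_1,w_2])$ (for $x_i\in\mathfrak{a}_0$, $y_i\in\mathfrak{a}_1$, $u_i\in V_0$, $w_i\in V_1$), is a multiplicative Hom-Lie antialgebra (the semidirect product $\mathfrak{a}\ltimes V$).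
   Context: A Hom-Lie antialgebra $(\mathfrak{a},\alpha,\beta)$ is a supercommutative $\mathbb{Z}_2$-graded algebra $\mathfrak{a}=\mathfrak{a}_0\oplus\mathfrak{a}_1$ (even·even commutative, even·odd = odd·even, the product of two odd elements, written $[\cdot,\cdot]$, is skew-symmetric with values in $\mathfrak{a}_0$) with linear maps $\alpha:\mathfrak{a}_0\to\mathfrak{a}_0$, $\beta:\mathfrak{a}_1\to\mathfrak{a}_1$ such that for all $x_i\in\mathfrak{a}_0$, $y_i\in\mathfrak{a}_1$: $\alpha(x_1)\cdot(x_2\cdot x_3)=(x_1\cdot x_2)\cdot\alpha(x_3)$; $\alpha(x_1)\cdot(x_2\cdot y_1)=\tfrac12(x_1\cdot x_2)\cdot\beta(y_1)$; $\alpha(x_1)\cdot[y_1,y_2]=[x_1\cdot y_1,\beta(y_2)]+[\beta(y_1),x_1\cdot y_2]$; $\beta(y_1)\cdot[y_2,y_3]+\beta(y_2)\cdot[y_3,y_1]+\beta(y_3)\cdot[y_1,y_2]=0$. It is multiplicative if $\alpha(x_1\cdot x_2)=\alpha(x_1)\cdot\alpha(x_2)$, $\beta(x_1\cdot y_1)=\alpha(x_1)\cdot\beta(y_1)$, $\alpha([y_1,y_2])=[\beta(y_1),\beta(y_2)]$. The same notation ($\cdot$, $[\cdot,\cdot]$, $\alpha_{V_0},\beta_{V_1}$) is used for $V$. A representation of $\mathfrak{a}$ on $V$ is a pair of linear maps $\rho_0:\mathfrak{a}_0\to\operatorname{End}(V)_0=\operatorname{Hom}(V_0,V_0)\oplus\operatorname{Hom}(V_1,V_1)$,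 $\rho_1:\mathfrak{a}_1\to\operatorname{End}(V)_1=\operatorname{Hom}(V_0,V_1)\oplus\operatorname{Hom}(V_1,V_0)$ such that for all $x,x_1,x_2\in\mathfrak{a}_0$, $y,y_1,y_2\in\mathfrak{a}_1$, $u\in V_0$, $w\in V_1$: (R1) $\alpha_{V_0}(\rho_0(x)u)=\rho_0(\alpha(x))\alpha_{V_0}(u)$; (R2) $\beta_{V_1}(\rho_0(x)w)=\rho_0(\alpha(x))\beta_{V_1}(w)$; (R3) $\beta_{V_1}(\rho_1(y)u)=\rho_1(\beta(y))\alpha_{V_0}(u)$; (R4) $\alpha_{V_0}(\rho_1(y)w)=\rho_1(\beta(y))\beta_{V_1}(w)$; (R5) $\rho_0(\alpha(x_1))\rho_0(x_2)u=\rho_0(x_1\cdot x_2)\alpha_{V_0}(u)$; (R6) $\rho_0(\alpha(x_1))\rho_0(x_2)w=\tfrac12\rho_0(x_1\cdot x_2)\beta_{V_1}(w)$; (R7) $\rho_0(\alpha(x))\rho_1(y)u=\tfrac12\rho_1(\beta(y))\rho_0(x)u$; (R8) $\rho_1(x\cdot y)\alpha_{V_0}(u)=\tfrac12\rho_1(\beta(y))\rho_0(x)u$; (R9) $\rho_0(\alpha(x))\rho_1(y)w=\rho_1(x\cdot y)\beta_{V_1}(w)+\rho_1(\beta(y))\rho_0(x)w$; (R10) $\rho_0([y_1,y_2])\alpha_{V_0}(u)=\rho_1(\beta(y_1))\rho_1(y_2)u-\rho_1(\beta(y_2))\rho_1(y_1)u$; (R11) $\rho_0([y_1,y_2])\beta_{V_1}(w)=-\rho_1(\beta(y_1))\rho_1(y_2)w+\rho_1(\beta(y_2))\rho_1(y_1)w$.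 An action of $\mathfrak{a}$ on $V$ is a representation $\rho$ such that for all $x\in\mathfrak{a}_0$, $y\in\mathfrak{a}_1$, $u,u_1,u_2\in V_0$, $w,w_1,w_2\in V_1$: (A1) $\rho_0(\alpha(x))(u_1\cdot u_2)=\rho_0(x)(u_1)\cdot\alpha_{V_0}(u_2)$; (A2) $\rho_0(\alpha(x))(u\cdot w)=\tfrac12\rho_0(x)(u)\cdot\beta_{V_1}(w)$; (A3) $\rho_1(y)(u_2)\cdot\alpha_{V_0}(u_1)=\tfrac12\rho_1(\beta(y))(u_1\cdot u_2)$; (A4) $\rho_0(x)(w)\cdot\alpha_{V_0}(u)=\tfrac12\rho_0(x)(u)\cdot\beta_{V_1}(w)$; (A5) $\rho_0(\alpha(x))([w_1,w_2])=[\rho_0(x)(w_1),\beta_{V_1}(w_2)]+[\beta_{V_1}(w_1),\rho_0(x)(w_2)]$; (A6) $\rho_1(\beta(y))(u\cdot w)=\alpha_{V_0}(u)\cdot\rho_1(y)(w)-[\rho_1(y)(u),\beta_{V_1}(w)]$; (A7) $\rho_1(\beta(y))([w_1,w_2])=\beta_{V_1}(w_1)\cdot\rho_1(y)(w_2)-\beta_{V_1}(w_2)\cdot\rho_1(y)(w_1)$. *)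

theory Defs
  imports Complex_Main "HOL-Library.Product_Plus"
begin

text \<open>A Z2-graded vector space a = a0 (+) a1 over a field 'k is given by two types
  'e (even part) and 'o (odd part) with scalar multiplications.
  A Hom-Lie antialgebra carries: the even-even product (mee), the even-odd product
  (meo; odd-even is the same by supercommutativity), the odd-odd bracket (br, values
  in the even part), and the twisting maps al (on a0) and be (on a1).\<close>

record ('k, 'e, 'o) hla =
  sce :: "'k \<Rightarrow> 'e \<Rightarrow> 'e"
  sco :: "'k \<Rightarrow> 'o \<Rightarrow> 'o"
  mee :: "'e \<Rightarrow> 'e \<Rightarrow> 'e"
  meo :: "'e \<Rightarrow> 'o \<Rightarrow> 'o"
  br  :: "'o \<Rightarrow> 'o \<Rightarrow> 'e"
  al  :: "'e \<Rightarrow> 'e"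
  be  :: "'o \<Rightarrow> 'o"

definition bilinear_map ::
  "('k::field \<Rightarrow> 'a::ab_group_add \<Rightarrow> 'a) \<Rightarrow> ('k \<Rightarrow> 'b::ab_group_add \<Rightarrow> 'b) \<Rightarrow>
   ('k \<Rightarrow> 'c::ab_group_add \<Rightarrow> 'c) \<Rightarrow> ('a \<Rightarrow> 'b \<Rightarrow> 'c) \<Rightarrow> bool" where
  "bilinear_map s1 s2 s3 f \<longleftrightarrow>
     (\<forall>x. Vector_Spaces.linear s2 s3 (f x)) \<and> (\<forall>y. Vector_Spaces.linear s1 s3 (\<lambda>x. f x y))"

definition hom_lie_antialgebra ::
  "('k::field, 'e::ab_group_add, 'o::ab_group_add) hla \<Rightarrow> bool" where
  "hom_lie_antialgebra A \<longleftrightarrow>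
     vector_space (sce A) \<and> vector_space (sco A) \<and>
     bilinear_map (sce A) (sce A) (sce A) (mee A) \<and>
     bilinear_map (sce A) (sco A) (sco A) (meo A) \<and>
     bilinear_map (sco A) (sco A) (sce A) (br A) \<and>
     Vector_Spaces.linear (sce A) (sce A) (al A) \<and>
     Vector_Spaces.linear (sco A) (sco A) (be A) \<and>
     (\<forall>x1 x2. mee A x1 x2 = mee A x2 x1) \<and>
     (\<forall>y1 y2. br A y1 y2 = - br A y2 y1) \<and>
     (\<forall>x1 x2 x3. mee A (al A x1) (mee A x2 x3) = mee A (mee A x1 x2) (al A x3)) \<and>
     (\<forall>x1 x2 y1. meo A (al A x1) (meo A x2 y1) =
                  sco A (1/2) (meo A (mee A x1 x2) (be A y1))) \<and>
     (\<forall>x1 y1 y2. mee A (al A x1) (br A y1 y2) =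
                  br A (meo A x1 y1) (be A y2) + br A (be A y1) (meo A x1 y2)) \<and>
     (\<forall>y1 y2 y3. meo A (br A y2 y3) (be A y1) + meo A (br A y3 y1) (be A y2)
                  + meo A (br A y1 y2) (be A y3) = 0)"

text \<open>Note: beta(y1).[y2,y3] is the odd-even product, equal to meo [y2,y3] (beta y1).\<close>

definition multiplicative :: "('k, 'e, 'o) hla \<Rightarrow> bool" where
  "multiplicative A \<longleftrightarrow>
     (\<forall>x1 x2. al A (mee A x1 x2) = mee A (al A x1) (al A x2)) \<and>
     (\<forall>x1 y1. be A (meo A x1 y1) = meo A (al A x1) (be A y1)) \<and>
     (\<forall>y1 y2. al A (br A y1 y2) = br A (be A y1) (be A y2))"

text \<open>rho0 = (r00, r01) : a0 -> Hom(V0,V0) (+) Hom(V1,V1);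
  rho1 = (r10, r11) : a1 -> Hom(V0,V1) (+) Hom(V1,V0).\<close>

record ('a0, 'a1, 'v0, 'v1) hla_rep =
  r00 :: "'a0 \<Rightarrow> 'v0 \<Rightarrow> 'v0"
  r01 :: "'a0 \<Rightarrow> 'v1 \<Rightarrow> 'v1"
  r10 :: "'a1 \<Rightarrow> 'v0 \<Rightarrow> 'v1"
  r11 :: "'a1 \<Rightarrow> 'v1 \<Rightarrow> 'v0"

definition representation ::
  "('k::field, 'a0::ab_group_add, 'a1::ab_group_add) hla \<Rightarrow>
   ('k, 'v0::ab_group_add, 'v1::ab_group_add) hla \<Rightarrow>
   ('a0, 'a1, 'v0, 'v1) hla_rep \<Rightarrow> bool" where
  "representation A V R \<longleftrightarrow>
     \<comment> \<open>rho0, rho1 are linear maps into the respective spaces of linear maps\<close>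
     bilinear_map (sce A) (sce V) (sce V) (r00 R) \<and>
     bilinear_map (sce A) (sco V) (sco V) (r01 R) \<and>
     bilinear_map (sco A) (sce V) (sco V) (r10 R) \<and>
     bilinear_map (sco A) (sco V) (sce V) (r11 R) \<and>
     \<comment> \<open>(R1)\<close>
     (\<forall>x u. al V (r00 R x u) = r00 R (al A x) (al V u)) \<and>
     \<comment> \<open>(R2)\<close>
     (\<forall>x w. be V (r01 R x w) = r01 R (al A x) (be V w)) \<and>
     \<comment> \<open>(R3)\<close>
     (\<forall>y u. be V (r10 R y u) = r10 R (be A y) (al V u)) \<and>
     \<comment> \<open>(R4)\<close>
     (\<forall>y w. al V (r11 R y w) = r11 R (be A y) (be V w)) \<and>
     \<comment> \<open>(R5)\<close>
     (\<forall>x1 x2 u. r00 R (al A x1) (r00 R x2 u) = r00 R (mee A x1 x2) (al V u)) \<and>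
     \<comment> \<open>(R6)\<close>
     (\<forall>x1 x2 w. r01 R (al A x1) (r01 R x2 w) = sco V (1/2) (r01 R (mee A x1 x2) (be V w))) \<and>
     \<comment> \<open>(R7)\<close>
     (\<forall>x y u. r01 R (al A x) (r10 R y u) = sco V (1/2) (r10 R (be A y) (r00 R x u))) \<and>
     \<comment> \<open>(R8)\<close>
     (\<forall>x y u. r10 R (meo A x y) (al V u) = sco V (1/2) (r10 R (be A y) (r00 R x u))) \<and>
     \<comment> \<open>(R9)\<close>
     (\<forall>x y w. r00 R (al A x) (r11 R y w) =
               r11 R (meo A x y) (be V w) + r11 R (be A y) (r01 R x w)) \<and>
     \<comment> \<open>(R10)\<close>
     (\<forall>y1 y2 u. r00 R (br A y1 y2) (al V u) =
               r11 R (be A y1) (r10 R y2 u) - r11 R (be A y2) (r10 R y1 u)) \<and>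
     \<comment> \<open>(R11)\<close>
     (\<forall>y1 y2 w. r01 R (br A y1 y2) (be V w) =
               - r10 R (be A y1) (r11 R y2 w) + r10 R (be A y2) (r11 R y1 w))"

definition action ::
  "('k::field, 'a0::ab_group_add, 'a1::ab_group_add) hla \<Rightarrow>
   ('k, 'v0::ab_group_add, 'v1::ab_group_add) hla \<Rightarrow>
   ('a0, 'a1, 'v0, 'v1) hla_rep \<Rightarrow> bool" where
  "action A V R \<longleftrightarrow>
     representation A V R \<and>
     \<comment> \<open>(A1)\<close>
     (\<forall>x u1 u2. r00 R (al A x) (mee V u1 u2) = mee V (r00 R x u1) (al V u2)) \<and>
     \<comment> \<open>(A2)\<close>
     (\<forall>x u w. r01 R (al A x) (meo V u w) = sco V (1/2) (meo V (r00 R x u) (be V w))) \<and>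
     \<comment> \<open>(A3): rho1(y)(u2) . alpha(u1) is the odd-even product\<close>
     (\<forall>y u1 u2. meo V (al V u1) (r10 R y u2) = sco V (1/2) (r10 R (be A y) (mee V u1 u2))) \<and>
     \<comment> \<open>(A4): rho0(x)(w) . alpha(u) is the odd-even product\<close>
     (\<forall>x u w. meo V (al V u) (r01 R x w) = sco V (1/2) (meo V (r00 R x u) (be V w))) \<and>
     \<comment> \<open>(A5)\<close>
     (\<forall>x w1 w2. r00 R (al A x) (br V w1 w2) =
                br V (r01 R x w1) (be V w2) + br V (be V w1) (r01 R x w2)) \<and>
     \<comment> \<open>(A6)\<close>
     (\<forall>y u w. r11 R (be A y) (meo V u w) =
                mee V (al V u) (r11 R y w) - br V (r10 R y u) (be V w)) \<and>
     \<comment> \<open>(A7): beta(w1) . rho1(y)(w2) is the odd-even product\<close>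
     (\<forall>y w1 w2. r10 R (be A y) (br V w1 w2) =
                meo V (r11 R y w2) (be V w1) - meo V (r11 R y w1) (be V w2))"

definition semidirect ::
  "('k, 'a0::ab_group_add, 'a1::ab_group_add) hla \<Rightarrow>
   ('k, 'v0::ab_group_add, 'v1::ab_group_add) hla \<Rightarrow>
   ('a0, 'a1, 'v0, 'v1) hla_rep \<Rightarrow> ('k, 'a0 \<times> 'v0, 'a1 \<times> 'v1) hla" where
  "semidirect A V R =
    \<lparr> sce = (\<lambda>c (x, u). (sce A c x, sce V c u)),
      sco = (\<lambda>c (y, w). (sco A c y, sco V c w)),
      mee = (\<lambda>(x1, u1) (x2, u2). (mee A x1 x2, r00 R x1 u2 + r00 R x2 u1 + mee V u1 u2)),
      meo = (\<lambda>(x1, u1) (y1, w1). (meo A x1 y1, r01 R x1 w1 + r10 R y1 u1 + meo V u1 w1)),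
      br = (\<lambda>(y1, w1) (y2, w2). (br A y1 y2, r11 R y1 w2 - r11 R y2 w1 + br V w1 w2)),
      al = (\<lambda>(x, u). (al A x, al V u)),
      be = (\<lambda>(y, w). (be A y, be V w)) \<rparr>"

end

theory Submission
  imports Defs
begin

text \<open>Each axiom of \<open>a \<ltimes> V\<close> splits into an \<open>a\<close>-component, which is the same axiom
  of \<open>a\<close>, and a \<open>V\<close>-component. Expanded by bilinearity, the latter is a sum of terms that
  cancel in groups, each group being an axiom of \<open>V\<close>, a representation identity (R1)--(R11)
  or an action identity (A1)--(A7), up to commutativity and skew-symmetry.\<close>

lemma linear_ops:
  assumes "Vector_Spaces.linear s1 s2 f"
  shows "f (a + b) = f a + f b" "f (s1 c a) = s2 c (f a)" "f (a - b) = f a - f b"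
    "f (- a) = - f a" "f 0 = 0"
proof -
  interpret Vector_Spaces.linear s1 s2 f by fact
  show "f (a + b) = f a + f b" "f (s1 c a) = s2 c (f a)" "f (a - b) = f a - f b"
    "f (- a) = - f a" "f 0 = 0" by (simp_all add: add scale diff neg)
qed

lemma bilinear_map_ops:
  assumes "bilinear_map s1 s2 s3 f"
  shows "f x (a + b) = f x a + f x b" "f x (s2 c a) = s3 c (f x a)"
    "f x (a - b) = f x a - f x b" "f x (- a) = - f x a" "f x 0 = 0"
    "f (p + q) y = f p y + f q y" "f (s1 c p) y = s3 c (f p y)"
    "f (p - q) y = f p y - f q y" "f (- p) y = - f p y" "f 0 y = 0"
  using linear_ops[of s2 s3 "f x"] linear_ops[of s1 s3 "\<lambda>x. f x y"] assms
  unfolding bilinear_map_def by auto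

lemma vector_space_ops:
  assumes "vector_space s"
  shows "s a (x + y) = s a x + s a y" "s (a + b) x = s a x + s b x"
    "s a (s b x) = s (a * b) x" "s 1 x = x" "s a (x - y) = s a x - s a y"
    "s a (- x) = - s a x"
proof -
  interpret vector_space s by fact
  show "s a (x + y) = s a x + s a y" "s (a + b) x = s a x + s b x"
    "s a (s b x) = s (a * b) x" "s 1 x = x" "s a (x - y) = s a x - s a y"
    "s a (- x) = - s a x"
    by (simp_all add: scale_right_distrib scale_left_distrib scale_right_diff_distrib
        scale_minus_right)
qed

locale hom_lie_antialg =
  fixes A :: "('k::field, 'e::ab_group_add, 'o::ab_group_add) hla"
  assumes vector_space_even: "vector_space (sce A)"
    and vector_space_odd: "vector_space (sco A)"
    and bilinear_mee: "bilinear_map (sce A) (sce A) (sce A) (mee A)"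
    and bilinear_meo: "bilinear_map (sce A) (sco A) (sco A) (meo A)"
    and bilinear_br: "bilinear_map (sco A) (sco A) (sce A) (br A)"
    and linear_al: "Vector_Spaces.linear (sce A) (sce A) (al A)"
    and linear_be: "Vector_Spaces.linear (sco A) (sco A) (be A)"
    and mee_commute: "mee A x1 x2 = mee A x2 x1"
    and br_skew: "br A y1 y2 = - br A y2 y1"
    and hom_assoc: "mee A (al A x1) (mee A x2 x3) = mee A (mee A x1 x2) (al A x3)"
    and hom_assoc_odd: "meo A (al A x1) (meo A x2 y1) = sco A (1/2) (meo A (mee A x1 x2) (be A y1))"
    and hom_leibniz: "mee A (al A x1) (br A y1 y2) =
      br A (meo A x1 y1) (be A y2) + br A (be A y1) (meo A x1 y2)"
    and hom_jacobi: "meo A (br A y2 y3) (be A y1) + meo A (br A y3 y1) (be A y2)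
      + meo A (br A y1 y2) (be A y3) = 0"
begin

lemmas linear_simps = bilinear_map_ops[OF bilinear_mee] bilinear_map_ops[OF bilinear_meo]
  bilinear_map_ops[OF bilinear_br] linear_ops[OF linear_al] linear_ops[OF linear_be]

lemmas scale_simps = vector_space_ops[OF vector_space_even] vector_space_ops[OF vector_space_odd]

end

lemma hom_lie_antialgebra_iff: "hom_lie_antialgebra A \<longleftrightarrow> hom_lie_antialg A"
  unfolding hom_lie_antialgebra_def hom_lie_antialg_def by blast

locale multiplicative_hla = hom_lie_antialg +
  assumes al_mee: "al A (mee A x1 x2) = mee A (al A x1) (al A x2)"
    and be_meo: "be A (meo A x1 y1) = meo A (al A x1) (be A y1)"
    and al_br: "al A (br A y1 y2) = br A (be A y1) (be A y2)"

lemma multiplicative_hla_iff: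
  "multiplicative_hla A \<longleftrightarrow> hom_lie_antialgebra A \<and> multiplicative A"
  unfolding multiplicative_hla_def multiplicative_hla_axioms_def multiplicative_def
    hom_lie_antialgebra_iff by blast

locale hla_action =
  A: multiplicative_hla A + V: multiplicative_hla V
  for A :: "('k::field, 'a0::ab_group_add, 'a1::ab_group_add) hla"
    and V :: "('k, 'v0::ab_group_add, 'v1::ab_group_add) hla" +
  fixes R :: "('a0, 'a1, 'v0, 'v1) hla_rep"
  assumes bilinear_r00: "bilinear_map (sce A) (sce V) (sce V) (r00 R)"
    and bilinear_r01: "bilinear_map (sce A) (sco V) (sco V) (r01 R)"
    and bilinear_r10: "bilinear_map (sco A) (sce V) (sco V) (r10 R)"
    and bilinear_r11: "bilinear_map (sco A) (sco V) (sce V) (r11 R)"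
    and R1: "al V (r00 R x u) = r00 R (al A x) (al V u)"
    and R2: "be V (r01 R x w) = r01 R (al A x) (be V w)"
    and R3: "be V (r10 R y u) = r10 R (be A y) (al V u)"
    and R4: "al V (r11 R y w) = r11 R (be A y) (be V w)"
    and R5: "r00 R (al A x1) (r00 R x2 u) = r00 R (mee A x1 x2) (al V u)"
    and R6: "r01 R (al A x1) (r01 R x2 w) = sco V (1/2) (r01 R (mee A x1 x2) (be V w))"
    and R7: "r01 R (al A x) (r10 R y u) = sco V (1/2) (r10 R (be A y) (r00 R x u))"
    and R8: "r10 R (meo A x y) (al V u) = sco V (1/2) (r10 R (be A y) (r00 R x u))"
    and R9: "r00 R (al A x) (r11 R y w) = r11 R (meo A x y) (be V w) + r11 R (be A y) (r01 R x w)"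
    and R10: "r00 R (br A y1 y2) (al V u) =
      r11 R (be A y1) (r10 R y2 u) - r11 R (be A y2) (r10 R y1 u)"
    and R11: "r01 R (br A y1 y2) (be V w) =
      - r10 R (be A y1) (r11 R y2 w) + r10 R (be A y2) (r11 R y1 w)"
    and A1: "r00 R (al A x) (mee V u1 u2) = mee V (r00 R x u1) (al V u2)"
    and A2: "r01 R (al A x) (meo V u w) = sco V (1/2) (meo V (r00 R x u) (be V w))"
    and A3: "meo V (al V u1) (r10 R y u2) = sco V (1/2) (r10 R (be A y) (mee V u1 u2))"
    and A4: "meo V (al V u) (r01 R x w) = sco V (1/2) (meo V (r00 R x u) (be V w))"
    and A5: "r00 R (al A x) (br V w1 w2) = br V (r01 R x w1) (be V w2) + br V (be V w1) (r01 R x w2)"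
    and A6: "r11 R (be A y) (meo V u w) = mee V (al V u) (r11 R y w) - br V (r10 R y u) (be V w)"
    and A7: "r10 R (be A y) (br V w1 w2) = meo V (r11 R y w2) (be V w1) - meo V (r11 R y w1) (be V w2)"
begin

lemmas linear_simps = A.linear_simps V.linear_simps
  bilinear_map_ops[OF bilinear_r00] bilinear_map_ops[OF bilinear_r01]
  bilinear_map_ops[OF bilinear_r10] bilinear_map_ops[OF bilinear_r11]

abbreviation "S \<equiv> semidirect A V R"

lemma semidirect_simps:
  "sce S c (x, u) = (sce A c x, sce V c u)"
  "sco S c (y, w) = (sco A c y, sco V c w)"
  "mee S (x1, u1) (x2, u2) = (mee A x1 x2, r00 R x1 u2 + r00 R x2 u1 + mee V u1 u2)"
  "meo S (x1, u1) (y1, w1) = (meo A x1 y1, r01 R x1 w1 + r10 R y1 u1 + meo V u1 w1)"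
  "br S (y1, w1) (y2, w2) = (br A y1 y2, r11 R y1 w2 - r11 R y2 w1 + br V w1 w2)"
  "al S (x, u) = (al A x, al V u)"
  "be S (y, w) = (be A y, be V w)"
  by (simp_all add: semidirect_def)

lemma semidirect_multiplicative: "multiplicative S"
  unfolding multiplicative_def
  by (simp add: split_paired_all semidirect_simps linear_simps A.al_mee A.be_meo A.al_br
      V.al_mee V.be_meo V.al_br R1 R2 R3 R4)

lemma semidirect_vector_space: "vector_space (sce S)" "vector_space (sco S)"
  unfolding vector_space_def
  by (simp_all add: split_paired_all semidirect_simps A.scale_simps V.scale_simps)

lemma semidirect_linear:
  "bilinear_map (sce S) (sce S) (sce S) (mee S)"
  "bilinear_map (sce S) (sco S) (sco S) (meo S)"
  "bilinear_map (sco S) (sco S) (sce S) (br S)"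
  "Vector_Spaces.linear (sce S) (sce S) (al S)"
  "Vector_Spaces.linear (sco S) (sco S) (be S)"
  unfolding bilinear_map_def Vector_Spaces.linear_iff
  by (simp_all add: semidirect_vector_space split_paired_all semidirect_simps linear_simps
      A.scale_simps V.scale_simps algebra_simps)

lemma semidirect_mee_commute: "mee S X1 X2 = mee S X2 X1"
  by (cases X1; cases X2) (simp add: semidirect_simps A.mee_commute V.mee_commute add_ac)

lemma semidirect_br_skew: "br S Y1 Y2 = - br S Y2 Y1"
proof -
  obtain y1 w1 y2 w2 where "Y1 = (y1, w1)" "Y2 = (y2, w2)"
    by fastforce
  then show ?thesis
    by (simp add: semidirect_simps A.br_skew[of y1] V.br_skew[of w1])
qed

lemma semidirect_hom_assoc:
  "mee S (al S (x1, u1)) (mee S (x2, u2) (x3, u3)) = mee S (mee S (x1, u1) (x2, u2)) (al S (x3, u3))"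
proof -
  have "r00 R (al A x1) (r00 R x3 u2) = r00 R (al A x3) (r00 R x1 u2)"
    and "r00 R (mee A x2 x3) (al V u1) = r00 R (al A x3) (r00 R x2 u1)"
    by (metis R5 A.mee_commute)+
  moreover have "mee V (al V u1) (r00 R x2 u3) = mee V (r00 R x2 u1) (al V u3)"
    and "mee V (al V u1) (r00 R x3 u2) = r00 R (al A x3) (mee V u1 u2)"
    by (metis A1 V.mee_commute)+
  ultimately show ?thesis
    by (simp add: semidirect_simps linear_simps A.hom_assoc V.hom_assoc R5[of x1 x2 u3]
        A1[of x1 u2 u3] algebra_simps)
qed

lemma semidirect_hom_assoc_odd:
  "meo S (al S (x1, u1)) (meo S (x2, u2) (y, w)) =
    sco S (1/2) (meo S (mee S (x1, u1) (x2, u2)) (be S (y, w)))"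
  by (simp add: semidirect_simps linear_simps A.scale_simps V.scale_simps A.hom_assoc_odd
      V.hom_assoc_odd R6[of x1 x2 w] R7[of x1 y u2] R8[of x2 y u1] A2[of x1 u2 w] A3[of u1 y u2]
      A4[of u1 x2 w] algebra_simps)

lemma semidirect_hom_leibniz:
  "mee S (al S (x, u)) (br S (y1, w1) (y2, w2)) =
    br S (meo S (x, u) (y1, w1)) (be S (y2, w2)) + br S (be S (y1, w1)) (meo S (x, u) (y2, w2))"
proof -
  have "mee V (al V u) (r11 R y w) = r11 R (be A y) (meo V u w) + br V (r10 R y u) (be V w)"
    for y w
    using A6[of y u w] by simp
  moreover have "br V (be V w1) (r10 R y2 u) = - br V (r10 R y2 u) (be V w1)"
    by (rule V.br_skew)
  ultimately show ?thesis
    by (simp add: semidirect_simps linear_simps A.hom_leibniz V.hom_leibniz[of u w1 w2]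
        R9[of x y1 w2] R9[of x y2 w1] R10[of y1 y2 u] A5[of x w1 w2] algebra_simps)
qed

lemma semidirect_hom_jacobi:
  "meo S (br S (y2, w2) (y3, w3)) (be S (y1, w1)) + meo S (br S (y3, w3) (y1, w1)) (be S (y2, w2))
    + meo S (br S (y1, w1) (y2, w2)) (be S (y3, w3)) = 0"
  using A.hom_jacobi[of y2 y3 y1] V.hom_jacobi[of w2 w3 w1]
  by (simp add: semidirect_simps linear_simps R11[of y2 y3 w1] R11[of y3 y1 w2] R11[of y1 y2 w3]
      A7[of y1 w2 w3] A7[of y2 w3 w1] A7[of y3 w1 w2] algebra_simps zero_prod_def)

sublocale semidirect: multiplicative_hla S
proof intro_locales
  show "hom_lie_antialg S"
    unfolding hom_lie_antialg_def split_paired_All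
    by (intro conjI allI; fact semidirect_vector_space semidirect_linear semidirect_mee_commute
        semidirect_br_skew semidirect_hom_assoc semidirect_hom_assoc_odd semidirect_hom_leibniz
        semidirect_hom_jacobi)
  show "multiplicative_hla_axioms S"
    using semidirect_multiplicative
    unfolding multiplicative_hla_axioms_def multiplicative_def by blast
qed

end

lemma action_imp_hla_action:
  assumes "multiplicative_hla A" "multiplicative_hla V" "action A V R"
  shows "hla_action A V R"
  using assms unfolding hla_action_def hla_action_axioms_def action_def representation_def
  by simp

theorem theorem3p4:
  fixes A :: "('k::field, 'a0::ab_group_add, 'a1::ab_group_add) hla"
    and V :: "('k, 'v0::ab_group_add, 'v1::ab_group_add) hla"
    and R :: "('a0, 'a1, 'v0, 'v1) hla_rep"
  assumes "(2::'k) \<noteq> 0"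
    and "hom_lie_antialgebra A" and "multiplicative A"
    and "hom_lie_antialgebra V" and "multiplicative V"
    and "action A V R"
  shows "hom_lie_antialgebra (semidirect A V R) \<and> multiplicative (semidirect A V R)"
proof -
  have "hla_action A V R"
    using assms(2-6) by (intro action_imp_hla_action) (simp_all add: multiplicative_hla_iff)
  then interpret hla_action A V R .
  show ?thesis
    using semidirect.multiplicative_hla_axioms by (simp add: multiplicative_hla_iff)
qed

end
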